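(* CTL*$_{cd}$ is strictly more expressive than CTL* and is incomparable with the modal $\mu$-calculus. Precisely: (1) every CTL* state formula is a CTL*$_{cd}$ state formula, and there is a CTL*$_{cd}$ state formula $\varphi$ such that no CTL* state formula $\chi$ satisfies ($\mathcal K\models\varphi\iff\mathcal K\models\chi$) for all Kripke structures $\mathcal K$; (2) there is a CTL*$_{cd}$ state formula not equivalent (over all Kripke structures, evaluated at the initial world) to any modal $\mu$-calculus formula; (3) there is a modal $\mu$-calculus formula (e.g. $\nu x.\,(p\wedge\Box\Box x)$) not equivalent (over all Kripke structures, evaluated at the initial world) to any CTL*$_{cd}$ state formula.
   Context: A Kripke structure over a finite set $AP$ of atomic propositions is a tuple $\mathcal K=(AP,W,R,L,w_I)$ where $W$ is a countable non-empty set of worlds, $w_I\in W$ is the initial world, $R\subseteq W\times W$ is a left-total transition relation (every world has at least one $R$-successor), and $L:W\to 2^{AP}$ is a labelling function. A path is an infinite sequence $\pi=\pi_0\pi_1\cdots$ of worlds with $(\pi_i,\pi_{i+1})\in R$ for all $i\in\mathbb N$; $\mathrm{Pth}(w)$ is the set of paths with $\pi_0=w$. A path $\pi$ is a cycle if for every $i\in\mathbb N$ there is $j>i$ with $\pi_j=\pi_0$ (i.e. $\pi_0$ occurs infinitely often in $\pi$); $\mathrm{Cyc}(w)$ is the set of cycles with $\pi_0=w$. Syntax of CTL*$_{cd}$: state formulas $\varphi::=p\mid\neg\varphi\mid\varphi\wedge\varphi\mid\varphi\vee\varphi\mid \mathsf E\psi\mid\mathsf A\psi\mid\mathsf E^{c}\psi\mid\mathsf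 A^{c}\psi$ with $p\in AP$; path formulas $\psi::=\varphi\mid\neg\psi\mid\psi\wedge\psi\mid\psi\vee\psi\mid\mathsf X\psi\mid\psi\,\mathsf U\,\psi$. Semantics: $\mathcal K,w\models p$ iff $p\in L(w)$; Boolean connectives as usual; $\mathcal K,w\models\mathsf E\psi$ iff some $\pi\in\mathrm{Pth}(w)$ has $\mathcal K,\pi,0\models\psi$; $\mathcal K,w\models\mathsf A\psi$ iff every $\pi\in\mathrm{Pth}(w)$ has $\mathcal K,\pi,0\models\psi$; $\mathcal K,w\models\mathsf E^{c}\psi$ iff some $\pi\in\mathrm{Cyc}(w)$ has $\mathcal K,\pi,0\models\psi$; $\mathcal K,w\models\mathsf A^{c}\psi$ iff every $\pi\in\mathrm{Cyc}(w)$ has $\mathcal K,\pi,0\models\psi$. For paths: $\mathcal K,\pi,i\models\varphi$ (state formula) iff $\mathcal K,\pi_i\models\varphi$; Boolean connectives as usual; $\mathcal K,\pi,i\models\mathsf X\psi$ iff $\mathcal K,\pi,i+1\models\psi$; $\mathcal K,\pi,i\models\psi_1\mathsf U\psi_2$ iff there is $k\ge0$ with $\mathcal K,\pi,i+k\models\psi_2$ and $\mathcal K,\pi,i+j\models\psi_1$ for all $0\le j<k$. $\mathcal K\models\varphi$ iff $\mathcal K,w_I\models\varphi$. CTL* is the fragment of CTL*$_{cd}$ without the operators $\mathsf E^c,\mathsf A^c$. The modal $\mu$-calculus is the standard one, interpreted over Kripke structures at the initial world, with $\Box$ the universal successor modality. *)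

theory Defs
  imports Main
begin

text \<open>Worlds are natural numbers (every countable set of worlds is, up to renaming,
a subset of nat). Atomic propositions range over a finite type 'a (the set AP).\<close>

record 'a kripke =
  worlds :: "nat set"
  trans :: "(nat \<times> nat) set"
  label :: "nat \<Rightarrow> 'a set"
  init :: nat

definition is_kripke :: "('a::finite) kripke \<Rightarrow> bool" where
  "is_kripke K \<longleftrightarrow> worlds K \<noteq> {} \<and> init K \<in> worlds K \<and>
     trans K \<subseteq> worlds K \<times> worlds K \<and>
     (\<forall>w \<in> worlds K. \<exists>v. (w, v) \<in> trans K)"

definition is_path :: "'a kripke \<Rightarrow> (nat \<Rightarrow> nat) \<Rightarrow> bool" where
  "is_path K \<pi> \<longleftrightarrow> (\<forall>i. (\<pi> i, \<pi> (Suc i)) \<in> trans K)"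

definition Pth :: "'a kripke \<Rightarrow> nat \<Rightarrow> (nat \<Rightarrow> nat) set" where
  "Pth K w = {\<pi>. is_path K \<pi> \<and> \<pi> 0 = w}"

definition Cyc :: "'a kripke \<Rightarrow> nat \<Rightarrow> (nat \<Rightarrow> nat) set" where
  "Cyc K w = {\<pi>. \<pi> \<in> Pth K w \<and> (\<forall>i. \<exists>j>i. \<pi> j = \<pi> 0)}"

datatype 'a sform =
    Prop 'a
  | SNot "'a sform"
  | SAnd "'a sform" "'a sform"
  | SOr "'a sform" "'a sform"
  | Ex "'a pform"
  | All "'a pform"
  | ExC "'a pform"
  | AllC "'a pform"
and 'a pform =
    State "'a sform"
  | PNot "'a pform"
  | PAnd "'a pform" "'a pform"
  | POr "'a pform" "'a pform"
  | Next "'a pform"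
  | Until "'a pform" "'a pform"

primrec sat :: "'a kripke \<Rightarrow> nat \<Rightarrow> 'a sform \<Rightarrow> bool"
and psat :: "'a kripke \<Rightarrow> (nat \<Rightarrow> nat) \<Rightarrow> nat \<Rightarrow> 'a pform \<Rightarrow> bool" where
  "sat K w (Prop p) = (p \<in> label K w)"
| "sat K w (SNot \<phi>) = (\<not> sat K w \<phi>)"
| "sat K w (SAnd \<phi> \<psi>) = (sat K w \<phi> \<and> sat K w \<psi>)"
| "sat K w (SOr \<phi> \<psi>) = (sat K w \<phi> \<or> sat K w \<psi>)"
| "sat K w (Ex \<psi>) = (\<exists>\<pi> \<in> Pth K w. psat K \<pi> 0 \<psi>)"
| "sat K w (All \<psi>) = (\<forall>\<pi> \<in> Pth K w. psat K \<pi> 0 \<psi>)"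
| "sat K w (ExC \<psi>) = (\<exists>\<pi> \<in> Cyc K w. psat K \<pi> 0 \<psi>)"
| "sat K w (AllC \<psi>) = (\<forall>\<pi> \<in> Cyc K w. psat K \<pi> 0 \<psi>)"
| "psat K \<pi> i (State \<phi>) = sat K (\<pi> i) \<phi>"
| "psat K \<pi> i (PNot \<psi>) = (\<not> psat K \<pi> i \<psi>)"
| "psat K \<pi> i (PAnd \<psi>1 \<psi>2) = (psat K \<pi> i \<psi>1 \<and> psat K \<pi> i \<psi>2)"
| "psat K \<pi> i (POr \<psi>1 \<psi>2) = (psat K \<pi> i \<psi>1 \<or> psat K \<pi> i \<psi>2)"
| "psat K \<pi> i (Next \<psi>) = psat K \<pi> (Suc i) \<psi>"
| "psat K \<pi> i (Until \<psi>1 \<psi>2) =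
     (\<exists>k. psat K \<pi> (i + k) \<psi>2 \<and> (\<forall>j<k. psat K \<pi> (i + j) \<psi>1))"

definition models :: "'a kripke \<Rightarrow> 'a sform \<Rightarrow> bool" where
  "models K \<phi> = sat K (init K) \<phi>"

primrec is_ctls :: "'a sform \<Rightarrow> bool"
and is_ctls_path :: "'a pform \<Rightarrow> bool" where
  "is_ctls (Prop p) = True"
| "is_ctls (SNot \<phi>) = is_ctls \<phi>"
| "is_ctls (SAnd \<phi> \<psi>) = (is_ctls \<phi> \<and> is_ctls \<psi>)"
| "is_ctls (SOr \<phi> \<psi>) = (is_ctls \<phi> \<and> is_ctls \<psi>)"
| "is_ctls (Ex \<psi>) = is_ctls_path \<psi>"
| "is_ctls (All \<psi>) = is_ctls_path \<psi>"
| "is_ctls (ExC \<psi>) = False"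
| "is_ctls (AllC \<psi>) = False"
| "is_ctls_path (State \<phi>) = is_ctls \<phi>"
| "is_ctls_path (PNot \<psi>) = is_ctls_path \<psi>"
| "is_ctls_path (PAnd \<psi>1 \<psi>2) = (is_ctls_path \<psi>1 \<and> is_ctls_path \<psi>2)"
| "is_ctls_path (POr \<psi>1 \<psi>2) = (is_ctls_path \<psi>1 \<and> is_ctls_path \<psi>2)"
| "is_ctls_path (Next \<psi>) = is_ctls_path \<psi>"
| "is_ctls_path (Until \<psi>1 \<psi>2) = (is_ctls_path \<psi>1 \<and> is_ctls_path \<psi>2)"

datatype 'a mu =
    MProp 'a
  | MNProp 'a
  | MVar nat
  | MAnd "'a mu" "'a mu"
  | MOr "'a mu" "'a mu"
  | MDia "'a mu"
  | MBox "'a mu"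
  | MLfp nat "'a mu"
  | MGfp nat "'a mu"

primrec mu_sem :: "'a kripke \<Rightarrow> (nat \<Rightarrow> nat set) \<Rightarrow> 'a mu \<Rightarrow> nat set" where
  "mu_sem K V (MProp p) = {w \<in> worlds K. p \<in> label K w}"
| "mu_sem K V (MNProp p) = {w \<in> worlds K. p \<notin> label K w}"
| "mu_sem K V (MVar x) = V x \<inter> worlds K"
| "mu_sem K V (MAnd a b) = mu_sem K V a \<inter> mu_sem K V b"
| "mu_sem K V (MOr a b) = mu_sem K V a \<union> mu_sem K V b"
| "mu_sem K V (MDia a) = {w \<in> worlds K. \<exists>v. (w, v) \<in> trans K \<and> v \<in> mu_sem K V a}"
| "mu_sem K V (MBox a) = {w \<in> worlds K. \<forall>v. (w, v) \<in> trans K \<longrightarrow> v \<in> mu_sem K V a}"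
| "mu_sem K V (MLfp x a) =
     \<Inter> {S. S \<subseteq> worlds K \<and> mu_sem K (V(x := S)) a \<subseteq> S} \<inter> worlds K"
| "mu_sem K V (MGfp x a) =
     \<Union> {S. S \<subseteq> worlds K \<and> S \<subseteq> mu_sem K (V(x := S)) a}"

primrec mu_free :: "'a mu \<Rightarrow> nat set" where
  "mu_free (MProp p) = {}"
| "mu_free (MNProp p) = {}"
| "mu_free (MVar x) = {x}"
| "mu_free (MAnd a b) = mu_free a \<union> mu_free b"
| "mu_free (MOr a b) = mu_free a \<union> mu_free b"
| "mu_free (MDia a) = mu_free a"
| "mu_free (MBox a) = mu_free a"
| "mu_free (MLfp x a) = mu_free a - {x}"
| "mu_free (MGfp x a) = mu_free a - {x}"

definition mu_closed :: "'a mu \<Rightarrow> bool" where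
  "mu_closed \<phi> \<longleftrightarrow> mu_free \<phi> = {}"

definition mu_models :: "'a kripke \<Rightarrow> 'a mu \<Rightarrow> bool" where
  "mu_models K \<phi> \<longleftrightarrow> init K \<in> mu_sem K (\<lambda>_. {}) \<phi>"

end

theory Submission
  imports Defs
begin

text \<open>
  CTL* and the modal \<mu>-calculus are invariant under bisimulation, whereas the cycle quantifier
  is not: the one-world loop and the infinite chain unfolding it are bisimilar, but only the
  former has a cycle. Conversely, \<open>\<nu>x. p \<and> \<box>\<box>x\<close> holds at the start of the chain
  \<open>0 \<rightarrow> 1 \<rightarrow> 2 \<rightarrow> \<dots>\<close> labelled \<open>p\<close> everywhere except at the world \<open>k\<close> iff \<open>k\<close> is
  odd. On such a chain every path is a suffix of the chain and there are no cycles, so a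
  formula with at most \<open>n\<close> nested \<open>X\<close> sees the hole only when it lies within
  \<open>n\<close> steps ahead: \<open>U\<close> cannot count, since repeating a position does not change the truth of
  an until. Hence the formula cannot distinguish the holes \<open>2n + 1\<close> and \<open>2n + 2\<close>.
\<close>

definition bisimulation :: "'a kripke \<Rightarrow> 'a kripke \<Rightarrow> (nat \<times> nat) set \<Rightarrow> bool" where
  "bisimulation K K' Z \<longleftrightarrow> Z \<subseteq> worlds K \<times> worlds K' \<and>
     (\<forall>(w, w') \<in> Z. label K w = label K' w' \<and>
        (\<forall>v. (w, v) \<in> trans K \<longrightarrow> (\<exists>v'. (w', v') \<in> trans K' \<and> (v, v') \<in> Z)) \<and>
        (\<forall>v'. (w', v') \<in> trans K' \<longrightarrow> (\<exists>v. (w, v) \<in> trans K \<and> (v, v') \<in> Z)))"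

lemma bisimulationD:
  assumes "bisimulation K K' Z" and "(w, w') \<in> Z"
  shows "w' \<in> worlds K'" and "label K w = label K' w'"
    and "(w, v) \<in> trans K \<Longrightarrow> \<exists>v'. (w', v') \<in> trans K' \<and> (v, v') \<in> Z"
    and "(w', v') \<in> trans K' \<Longrightarrow> \<exists>v. (w, v) \<in> trans K \<and> (v, v') \<in> Z"
  using assms by (auto simp: bisimulation_def)

lemma bisimulation_converse: "bisimulation K K' Z \<Longrightarrow> bisimulation K' K (Z\<inverse>)"
  by (auto simp: bisimulation_def)

lemma bisimulation_lift_path:
  assumes Z: "bisimulation K K' Z" and \<pi>: "\<pi> \<in> Pth K w" and "(w, w') \<in> Z"
  obtains \<pi>' where "\<pi>' \<in> Pth K' w'" and "\<And>i. (\<pi> i, \<pi>' i) \<in> Z"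
proof -
  have step: "\<exists>v'. (u', v') \<in> trans K' \<and> (\<pi> (Suc i), v') \<in> Z" if "(\<pi> i, u') \<in> Z" for i u'
    using bisimulationD(3)[OF Z that] \<pi> by (simp add: Pth_def is_path_def)
  define \<pi>' where "\<pi>' = rec_nat w' (\<lambda>i u'. SOME v'. (u', v') \<in> trans K' \<and> (\<pi> (Suc i), v') \<in> Z)"
  have related: "(\<pi> i, \<pi>' i) \<in> Z" for i
  proof (induction i)
    case 0
    then show ?case using \<pi> \<open>(w, w') \<in> Z\<close> by (simp add: \<pi>'_def Pth_def)
  next
    case (Suc i)
    then show ?case using someI_ex[OF step[OF Suc]] by (simp add: \<pi>'_def)
  qed
  have "(\<pi>' i, \<pi>' (Suc i)) \<in> trans K'" for i
    using someI_ex[OF step[OF related]] by (simp add: \<pi>'_def)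
  then have "\<pi>' \<in> Pth K' w'" by (simp add: Pth_def is_path_def \<pi>'_def)
  then show ?thesis using related by (rule that)
qed

lemma bisimulation_Pth:
  assumes "bisimulation K K' Z" and "(w, w') \<in> Z"
  shows "\<forall>\<pi> \<in> Pth K w. \<exists>\<pi>' \<in> Pth K' w'. \<forall>i. (\<pi> i, \<pi>' i) \<in> Z"
    and "\<forall>\<pi>' \<in> Pth K' w'. \<exists>\<pi> \<in> Pth K w. \<forall>i. (\<pi> i, \<pi>' i) \<in> Z"
proof -
  show "\<forall>\<pi> \<in> Pth K w. \<exists>\<pi>' \<in> Pth K' w'. \<forall>i. (\<pi> i, \<pi>' i) \<in> Z"
    using bisimulation_lift_path[OF assms(1) _ assms(2)] by metis
  have "(w', w) \<in> Z\<inverse>" using assms(2) by simp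
  from bisimulation_lift_path[OF bisimulation_converse[OF assms(1)] _ this]
  show "\<forall>\<pi>' \<in> Pth K' w'. \<exists>\<pi> \<in> Pth K w. \<forall>i. (\<pi> i, \<pi>' i) \<in> Z"
    by (metis converseD)
qed

lemma bisimulation_sat_ctls:
  assumes Z: "bisimulation K K' Z"
  shows "is_ctls \<phi> \<Longrightarrow> (w, w') \<in> Z \<Longrightarrow> sat K w \<phi> = sat K' w' \<phi>"
    and "is_ctls_path \<psi> \<Longrightarrow> (\<And>i. (\<pi> i, \<pi>' i) \<in> Z) \<Longrightarrow> psat K \<pi> i \<psi> = psat K' \<pi>' i \<psi>"
proof (induction \<phi> and \<psi> arbitrary: w w' and \<pi> \<pi>' i)
  case (Prop p)
  then show ?case using bisimulationD(2)[OF Z] by simp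
next
  case (Ex \<psi>)
  then show ?case using bisimulation_Pth[OF Z Ex.prems(2)] by simp metis
next
  case (All \<psi>)
  then show ?case using bisimulation_Pth[OF Z All.prems(2)] by simp metis
next
  case (Until \<psi>1 \<psi>2)
  have "psat K \<pi> j \<psi> = psat K' \<pi>' j \<psi>" if "\<psi> \<in> {\<psi>1, \<psi>2}" for j \<psi>
    using that Until.IH(1)[OF _ Until.prems(2)] Until.IH(2)[OF _ Until.prems(2)] Until.prems(1)
    by auto
  then show ?case by simp
qed (simp; blast)+

lemma mu_sem_subset_worlds: "mu_sem K V a \<subseteq> worlds K"
  by (induction a arbitrary: V) auto

lemma bisimulation_mu_sem:
  assumes Z: "bisimulation K K' Z"
    and "\<forall>x. Z `` V x \<subseteq> V' x" and "(w, w') \<in> Z" and "w \<in> mu_sem K V a"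
  shows "w' \<in> mu_sem K' V' a"
  using assms(2-)
proof (induction a arbitrary: V V' w w')
  case (MLfp y a)
  \<comment> \<open>pull a prefixed point of \<open>K'\<close> back along \<open>Z\<close>\<close>
  show ?case
  proof (simp, intro conjI allI impI)
    show "w' \<in> worlds K'" using bisimulationD(1)[OF Z MLfp.prems(2)] .
    fix S' assume S': "S' \<subseteq> worlds K' \<and> mu_sem K' (V'(y := S')) a \<subseteq> S'"
    define S where "S = {u \<in> worlds K. Z `` {u} \<subseteq> S'}"
    have compat: "\<forall>x. Z `` (V(y := S)) x \<subseteq> (V'(y := S')) x"
      using MLfp.prems(1) by (auto simp: S_def)
    have "mu_sem K (V(y := S)) a \<subseteq> S"
    proof
      fix u assume u: "u \<in> mu_sem K (V(y := S)) a"
      have "Z `` {u} \<subseteq> S'" using MLfp.IH[OF compat _ u] S' by blast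
      moreover have "u \<in> worlds K" using u mu_sem_subset_worlds by blast
      ultimately show "u \<in> S" by (simp add: S_def)
    qed
    moreover have "S \<subseteq> worlds K" by (auto simp: S_def)
    ultimately have "w \<in> S" using MLfp.prems(3) by simp
    then show "w' \<in> S'" using MLfp.prems(2) by (auto simp: S_def)
  qed
next
  case (MGfp y a)
  \<comment> \<open>push a postfixed point of \<open>K\<close> forward along \<open>Z\<close>\<close>
  then obtain S where S: "S \<subseteq> worlds K" "S \<subseteq> mu_sem K (V(y := S)) a" "w \<in> S" by auto
  have "\<forall>x. Z `` (V(y := S)) x \<subseteq> (V'(y := Z `` S)) x"
    using MGfp.prems(1) by auto
  then have "Z `` S \<subseteq> mu_sem K' (V'(y := Z `` S)) a"
    using MGfp.IH S(2) by blast
  moreover have "Z `` S \<subseteq> worlds K'" using bisimulationD(1)[OF Z] by blast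
  ultimately show ?case using S(3) MGfp.prems(2) by auto
next
  case (MDia a)
  then obtain v where v: "(w, v) \<in> trans K" "v \<in> mu_sem K V a" by auto
  then obtain v' where "(w', v') \<in> trans K'" "(v, v') \<in> Z"
    using bisimulationD(3)[OF Z MDia.prems(2)] by blast
  then show ?case
    using bisimulationD(1)[OF Z MDia.prems(2)] MDia.IH[OF MDia.prems(1) _ v(2)] by auto
next
  case (MBox a)
  have "v' \<in> mu_sem K' V' a" if step: "(w', v') \<in> trans K'" for v'
  proof -
    obtain v where "(w, v) \<in> trans K" "(v, v') \<in> Z"
      using bisimulationD(4)[OF Z MBox.prems(2) step] by blast
    moreover from this have "v \<in> mu_sem K V a" using MBox.prems(3) by auto
    ultimately show ?thesis using MBox.IH[OF MBox.prems(1)] by blast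
  qed
  then show ?case using bisimulationD(1)[OF Z MBox.prems(2)] by auto
next
  case (MAnd a b)
  then show ?case using MAnd.IH[OF MAnd.prems(1,2)] by simp
next
  case (MOr a b)
  then show ?case using MOr.IH[OF MOr.prems(1,2)] by auto
qed (use bisimulationD(1,2)[OF Z] in auto)

lemma bisimulation_models_ctls:
  assumes "bisimulation K K' Z" and "(init K, init K') \<in> Z" and "is_ctls \<chi>"
  shows "models K \<chi> \<longleftrightarrow> models K' \<chi>"
  using bisimulation_sat_ctls(1)[OF assms(1,3,2)] by (simp add: models_def)

lemma bisimulation_mu_models:
  assumes Z: "bisimulation K K' Z" and "(init K, init K') \<in> Z"
  shows "mu_models K \<chi> \<longleftrightarrow> mu_models K' \<chi>"
proof -
  have "(init K', init K) \<in> Z\<inverse>" using assms(2) by simp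
  then show ?thesis
    using bisimulation_mu_sem[OF Z _ assms(2), of "\<lambda>_. {}" "\<lambda>_. {}" \<chi>]
      bisimulation_mu_sem[OF bisimulation_converse[OF Z] _ _, of "\<lambda>_. {}" "\<lambda>_. {}" "init K'" "init K" \<chi>]
    unfolding mu_models_def by blast
qed

lemma psat_suffix:
  "(\<And>m. \<pi> (i + m) = \<pi>' (i' + m)) \<Longrightarrow> psat K \<pi> i \<psi> = psat K \<pi>' i' \<psi>"
proof (induction \<psi> arbitrary: i i' rule: pform.induct[where ?P1.0="\<lambda>_. True"])
  case (State \<phi>)
  then show ?case by (metis add_0_right psat.simps(1))
next
  case (Next \<psi>)
  have "psat K \<pi> (Suc i) \<psi> = psat K \<pi>' (Suc i') \<psi>"
    using Next.prems by (intro Next.IH) (metis add_Suc add_Suc_right)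
  then show ?case by simp
next
  case (Until \<psi>1 \<psi>2)
  have shifted: "\<pi> (i + j + m) = \<pi>' (i' + j + m)" for j m
    using Until.prems by (metis add.assoc)
  show ?case
    using Until.IH[OF shifted] by simp
qed (simp; blast)+

definition chain_kripke :: "(nat \<Rightarrow> 'a set) \<Rightarrow> 'a kripke" where
  "chain_kripke L = \<lparr>worlds = UNIV, trans = {(n, Suc n) | n. True}, label = L, init = 0\<rparr>"

lemma chain_kripke_simps [simp]:
  "worlds (chain_kripke L) = UNIV"
  "(w, v) \<in> trans (chain_kripke L) \<longleftrightarrow> v = Suc w"
  "label (chain_kripke L) = L"
  "init (chain_kripke L) = 0"
  by (auto simp: chain_kripke_def)

lemma chain_kripke_is_kripke: "is_kripke (chain_kripke L :: ('a::finite) kripke)"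
  by (simp add: is_kripke_def)

lemma Pth_chain_kripke: "Pth (chain_kripke L) w = {\<lambda>i. w + i}"
proof -
  have "\<pi> i = w + i" if "\<pi> \<in> Pth (chain_kripke L) w" for \<pi> i
    using that by (induction i) (auto simp: Pth_def is_path_def)
  then show ?thesis
    by (auto simp: Pth_def is_path_def)
qed

lemma Cyc_chain_kripke: "Cyc (chain_kripke L) w = {}"
  by (auto simp: Cyc_def Pth_chain_kripke)

lemma sat_chain_kripke_Ex: "sat (chain_kripke L) w (Ex \<psi>) = psat (chain_kripke L) id w \<psi>"
  and sat_chain_kripke_All: "sat (chain_kripke L) w (All \<psi>) = psat (chain_kripke L) id w \<psi>"
  using psat_suffix[of "\<lambda>i. w + i" 0 id w] by (simp_all add: Pth_chain_kripke)

definition loop_kripke :: "'a kripke" where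
  "loop_kripke = \<lparr>worlds = {0}, trans = {(0, 0)}, label = (\<lambda>_. {}), init = 0\<rparr>"

lemma loop_kripke_is_kripke: "is_kripke (loop_kripke :: ('a::finite) kripke)"
  by (auto simp: is_kripke_def loop_kripke_def)

lemma bisimulation_loop_chain: "bisimulation loop_kripke (chain_kripke (\<lambda>_. {})) ({0} \<times> UNIV)"
  by (auto simp: bisimulation_def loop_kripke_def)

lemma models_loop_ExC: "models loop_kripke (ExC (State (SNot (Prop p))))"
proof -
  have "(\<lambda>_. 0) \<in> Cyc loop_kripke 0"
    by (auto simp: Cyc_def Pth_def is_path_def loop_kripke_def)
  then show ?thesis by (force simp: models_def loop_kripke_def)
qed

lemma not_models_chain_ExC: "\<not> models (chain_kripke L) (ExC \<psi>)"
  by (simp add: models_def Cyc_chain_kripke)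

lemma ExC_not_ctls_expressible:
  fixes p :: "'a::finite"
  shows "\<not> (\<exists>\<chi>. is_ctls \<chi> \<and>
           (\<forall>K. is_kripke K \<longrightarrow> (models K (ExC (State (SNot (Prop p)))) \<longleftrightarrow> models K \<chi>)))"
proof
  assume "\<exists>\<chi>. is_ctls \<chi> \<and>
           (\<forall>K. is_kripke K \<longrightarrow> (models K (ExC (State (SNot (Prop p)))) \<longleftrightarrow> models K \<chi>))"
  then obtain \<chi> where "is_ctls \<chi>"
    and equiv: "\<forall>K. is_kripke K \<longrightarrow> (models K (ExC (State (SNot (Prop p)))) \<longleftrightarrow> models K \<chi>)"
    by blast
  then have "models (loop_kripke :: 'a kripke) \<chi> \<longleftrightarrow> models (chain_kripke (\<lambda>_. {})) \<chi>"
    by (intro bisimulation_models_ctls[OF bisimulation_loop_chain]) (simp_all add: loop_kripke_def)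
  moreover have "models loop_kripke \<chi>"
    using iffD1[OF equiv[rule_format, OF loop_kripke_is_kripke] models_loop_ExC] .
  moreover have "\<not> models (chain_kripke (\<lambda>_. {})) \<chi>"
    using equiv[rule_format, OF chain_kripke_is_kripke] not_models_chain_ExC by blast
  ultimately show False by simp
qed

lemma ExC_not_mu_expressible:
  fixes p :: "'a::finite"
  shows "\<not> (\<exists>\<chi>. \<forall>K. is_kripke K \<longrightarrow> (models K (ExC (State (SNot (Prop p)))) \<longleftrightarrow> mu_models K \<chi>))"
proof
  assume "\<exists>\<chi>. \<forall>K. is_kripke K \<longrightarrow> (models K (ExC (State (SNot (Prop p)))) \<longleftrightarrow> mu_models K \<chi>)"
  then obtain \<chi>
    where equiv: "\<forall>K. is_kripke K \<longrightarrow> (models K (ExC (State (SNot (Prop p)))) \<longleftrightarrow> mu_models K \<chi>)"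
    by blast
  have "mu_models (loop_kripke :: 'a kripke) \<chi> \<longleftrightarrow> mu_models (chain_kripke (\<lambda>_. {})) \<chi>"
    by (rule bisimulation_mu_models[OF bisimulation_loop_chain]) (simp add: loop_kripke_def)
  moreover have "mu_models loop_kripke \<chi>"
    using iffD1[OF equiv[rule_format, OF loop_kripke_is_kripke] models_loop_ExC] .
  moreover have "\<not> mu_models (chain_kripke (\<lambda>_. {})) \<chi>"
    using equiv[rule_format, OF chain_kripke_is_kripke] not_models_chain_ExC by blast
  ultimately show False by simp
qed

lemma psat_Until_unfold:
  "psat K \<pi> i (Until \<psi>1 \<psi>2) \<longleftrightarrow>
     psat K \<pi> i \<psi>2 \<or> (psat K \<pi> i \<psi>1 \<and> psat K \<pi> (Suc i) (Until \<psi>1 \<psi>2))"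
  (is "?U i \<longleftrightarrow> ?b i \<or> (?a i \<and> ?U (Suc i))")
proof
  assume "?U i"
  then obtain k where k: "psat K \<pi> (i + k) \<psi>2" "\<And>j. j < k \<Longrightarrow> psat K \<pi> (i + j) \<psi>1"
    by auto
  show "?b i \<or> (?a i \<and> ?U (Suc i))"
  proof (cases k)
    case 0
    then show ?thesis using k by simp
  next
    case (Suc k')
    have "?U (Suc i)"
      unfolding psat.simps
    proof (intro exI conjI allI impI)
      show "psat K \<pi> (Suc i + k') \<psi>2" using k Suc by simp
      show "psat K \<pi> (Suc i + j) \<psi>1" if "j < k'" for j
        using k(2)[of "Suc j"] Suc that by simp
    qed
    then show ?thesis using k(2)[of 0] Suc by simp
  qed
next
  assume "?b i \<or> (?a i \<and> ?U (Suc i))"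
  then show "?U i"
  proof
    assume "?b i"
    then show "?U i" unfolding psat.simps by (intro exI[of _ 0]) simp
  next
    assume "?a i \<and> ?U (Suc i)"
    then obtain k where k: "?a i" "psat K \<pi> (i + Suc k) \<psi>2"
      "\<And>j. j < k \<Longrightarrow> psat K \<pi> (i + Suc j) \<psi>1"
      by auto
    show "?U i"
      unfolding psat.simps
    proof (intro exI[of _ "Suc k"] conjI allI impI)
      show "psat K \<pi> (i + Suc k) \<psi>2" by (fact k(2))
      show "psat K \<pi> (i + j) \<psi>1" if "j < Suc k" for j
        using k that by (cases j) simp_all
    qed
  qed
qed

lemma psat_Until_stutter:
  assumes "\<And>j. j < m \<Longrightarrow> psat K \<pi> (i + j) \<psi>1 = psat K \<pi> (i + m) \<psi>1
                        \<and> psat K \<pi> (i + j) \<psi>2 = psat K \<pi> (i + m) \<psi>2"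
  shows "psat K \<pi> i (Until \<psi>1 \<psi>2) = psat K \<pi> (i + m) (Until \<psi>1 \<psi>2)"
  using assms
proof (induction m arbitrary: i)
  case 0
  then show ?case by simp
next
  case (Suc m)
  have "psat K \<pi> (Suc i) (Until \<psi>1 \<psi>2) = psat K \<pi> (i + Suc m) (Until \<psi>1 \<psi>2)"
    using Suc.IH[of "Suc i"] Suc.prems[of "Suc j" for j] by simp
  then show ?case
    using Suc.prems[of 0] psat_Until_unfold[of K \<pi> i] psat_Until_unfold[of K \<pi> "i + Suc m"]
    by auto
qed

definition holed_chain :: "nat \<Rightarrow> 'a kripke" where
  "holed_chain k = chain_kripke (\<lambda>w. if w = k then {} else UNIV)"

lemma holed_chain_simps [simp]:
  "worlds (holed_chain k) = UNIV"
  "(w, v) \<in> trans (holed_chain k) \<longleftrightarrow> v = Suc w"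
  "label (holed_chain k) w = (if w = k then {} else UNIV)"
  "init (holed_chain k) = 0"
  by (simp_all add: holed_chain_def)

lemma holed_chain_is_kripke: "is_kripke (holed_chain k :: ('a::finite) kripke)"
  unfolding holed_chain_def by (rule chain_kripke_is_kripke)

text \<open>
  Here \<open>d = k - w\<close> is the distance from the current world \<open>w\<close> to the hole \<open>k\<close>, negative once
  the hole has been passed; with at most \<open>n\<close> nested \<open>X\<close> the hole is visible only at
  distances \<open>0..n\<close>.
\<close>

definition hole_equiv :: "nat \<Rightarrow> int \<Rightarrow> int \<Rightarrow> bool" where
  "hole_equiv n d d' \<longleftrightarrow> d = d' \<or> (d < 0 \<and> d' < 0) \<or> (int n < d \<and> int n < d')"

lemma holed_chain_Until_equiv:
  fixes \<psi>1 \<psi>2 :: "'a pform"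
  assumes IH: "\<And>\<psi> k w k' w'. \<psi> \<in> {\<psi>1, \<psi>2} \<Longrightarrow> hole_equiv n (int k - int w) (int k' - int w') \<Longrightarrow>
                 psat (holed_chain k) id w \<psi> = psat (holed_chain k') id w' \<psi>"
    and equiv: "hole_equiv n (int k - int w) (int k' - int w')"
  shows "psat (holed_chain k) id w (Until \<psi>1 \<psi>2) = psat (holed_chain k') id w' (Until \<psi>1 \<psi>2)"
proof -
  let ?U = "\<lambda>k w. psat (holed_chain k :: 'a kripke) id w (Until \<psi>1 \<psi>2)"
  have same_view: "?U k w = ?U k' w'"
    if "int k - int w = int k' - int w' \<or> (int k - int w < 0 \<and> int k' - int w' < 0)" for k w k' w'
  proof -
    have "hole_equiv n (int k - int (w + j)) (int k' - int (w' + j))" for j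
      using that by (auto simp: hole_equiv_def)
    then have "psat (holed_chain k) id (w + j) \<psi> = psat (holed_chain k') id (w' + j) \<psi>"
      if "\<psi> \<in> {\<psi>1, \<psi>2}" for j \<psi>
      using IH that by blast
    then show ?thesis by simp
  qed
  have beyond_horizon: "?U k w = ?U k (k - Suc n)" if "int n < int k - int w" for k w
  proof -
    define m where "m = k - Suc n - w"
    have m: "w + m = k - Suc n" using that by (simp add: m_def)
    have "hole_equiv n (int k - int (w + j)) (int k - int (w + m))" if "j < m" for j
      using m that by (auto simp: hole_equiv_def)
    then have "psat (holed_chain k) id (w + j) \<psi> = psat (holed_chain k) id (w + m) \<psi>"
      if "j < m" "\<psi> \<in> {\<psi>1, \<psi>2}" for j \<psi>
      using IH that by blast
    then show ?thesis
      using psat_Until_stutter[of m "holed_chain k" id w \<psi>1 \<psi>2] m by simp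
  qed
  show ?thesis
  proof (cases "int n < int k - int w \<and> int n < int k' - int w'")
    case True
    then have "?U k (k - Suc n) = ?U k' (k' - Suc n)"
      by (intro same_view) simp
    then show ?thesis using True beyond_horizon by metis
  next
    case False
    then have "int k - int w = int k' - int w' \<or> (int k - int w < 0 \<and> int k' - int w' < 0)"
      using equiv by (auto simp: hole_equiv_def)
    then show ?thesis by (rule same_view)
  qed
qed

primrec next_depth :: "'a sform \<Rightarrow> nat" and next_depth_path :: "'a pform \<Rightarrow> nat" where
  "next_depth (Prop p) = 0"
| "next_depth (SNot \<phi>) = next_depth \<phi>"
| "next_depth (SAnd \<phi> \<psi>) = max (next_depth \<phi>) (next_depth \<psi>)"
| "next_depth (SOr \<phi> \<psi>) = max (next_depth \<phi>) (next_depth \<psi>)"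
| "next_depth (Ex \<psi>) = next_depth_path \<psi>"
| "next_depth (All \<psi>) = next_depth_path \<psi>"
| "next_depth (ExC \<psi>) = next_depth_path \<psi>"
| "next_depth (AllC \<psi>) = next_depth_path \<psi>"
| "next_depth_path (State \<phi>) = next_depth \<phi>"
| "next_depth_path (PNot \<psi>) = next_depth_path \<psi>"
| "next_depth_path (PAnd \<psi>1 \<psi>2) = max (next_depth_path \<psi>1) (next_depth_path \<psi>2)"
| "next_depth_path (POr \<psi>1 \<psi>2) = max (next_depth_path \<psi>1) (next_depth_path \<psi>2)"
| "next_depth_path (Next \<psi>) = Suc (next_depth_path \<psi>)"
| "next_depth_path (Until \<psi>1 \<psi>2) = max (next_depth_path \<psi>1) (next_depth_path \<psi>2)"

lemma holed_chain_sat_equiv: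
  fixes \<phi> :: "'a sform" and \<psi> :: "'a pform"
  shows "next_depth \<phi> \<le> n \<Longrightarrow> hole_equiv n (int k - int w) (int k' - int w') \<Longrightarrow>
           sat (holed_chain k) w \<phi> = sat (holed_chain k') w' \<phi>"
    and "next_depth_path \<psi> \<le> n \<Longrightarrow> hole_equiv n (int k - int w) (int k' - int w') \<Longrightarrow>
           psat (holed_chain k) id w \<psi> = psat (holed_chain k') id w' \<psi>"
proof (induction \<phi> and \<psi> arbitrary: n k w k' w' and n k w k' w')
  case (Prop p)
  then have "w = k \<longleftrightarrow> w' = k'" by (auto simp: hole_equiv_def)
  then show ?case by simp
next
  case (Ex \<psi>)
  then show ?case
    unfolding holed_chain_def sat_chain_kripke_Ex by (simp only: next_depth.simps)
next
  case (All \<psi>)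
  then show ?case
    unfolding holed_chain_def sat_chain_kripke_All by (simp only: next_depth.simps)
next
  case (ExC \<psi>)
  then show ?case by (simp add: holed_chain_def Cyc_chain_kripke)
next
  case (AllC \<psi>)
  then show ?case by (simp add: holed_chain_def Cyc_chain_kripke)
next
  case (Next \<psi>)
  then obtain n' where "n = Suc n'" "next_depth_path \<psi> \<le> n'" by (cases n) auto
  moreover from this have "hole_equiv n' (int k - int (Suc w)) (int k' - int (Suc w'))"
    using Next.prems(2) by (auto simp: hole_equiv_def)
  ultimately show ?case using Next.IH by simp
next
  case (Until \<psi>1 \<psi>2)
  show ?case
  proof (rule holed_chain_Until_equiv[OF _ Until.prems(2)])
    fix \<psi> k w k' w'
    assume "\<psi> \<in> {\<psi>1, \<psi>2}" and equiv: "hole_equiv n (int k - int w) (int k' - int w')"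
    then show "psat (holed_chain k) id w \<psi> = psat (holed_chain k') id w' \<psi>"
      using Until.IH(1)[OF _ equiv] Until.IH(2)[OF _ equiv] Until.prems(1) by (auto simp: id_def)
  qed
qed (simp; blast)+

abbreviation even_p :: "'a \<Rightarrow> 'a mu" where
  "even_p p \<equiv> MGfp 0 (MAnd (MProp p) (MBox (MBox (MVar 0))))"

lemma mu_models_holed_chain_even_p:
  fixes p :: 'a
  shows "mu_models (holed_chain k :: 'a kripke) (even_p p)
           \<longleftrightarrow> odd k"
proof -
  have "mu_sem (holed_chain k :: 'a kripke) V (MAnd (MProp p) (MBox (MBox (MVar 0))))
          = {w. w \<noteq> k \<and> Suc (Suc w) \<in> V 0}" for V
    by auto
  then have "mu_sem (holed_chain k :: 'a kripke) (\<lambda>_. {}) (even_p p)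
          = \<Union> {S. S \<subseteq> {w. w \<noteq> k \<and> Suc (Suc w) \<in> S}}"
    by (simp only: mu_sem.simps(9)) simp
  then have models_iff: "mu_models (holed_chain k :: 'a kripke) (even_p p)
          \<longleftrightarrow> (\<exists>S. S \<subseteq> {w. w \<noteq> k \<and> Suc (Suc w) \<in> S} \<and> 0 \<in> S)"
    by (auto simp: mu_models_def)
  show ?thesis
  proof
    assume "mu_models (holed_chain k :: 'a kripke) (even_p p)"
    then obtain S where S: "S \<subseteq> {w. w \<noteq> k \<and> Suc (Suc w) \<in> S}" "0 \<in> S"
      using models_iff by blast
    have "2 * i \<in> S" for i
    proof (induction i)
      case 0
      then show ?case using S(2) by simp
    next
      case (Suc i)
      then have "Suc (Suc (2 * i)) \<in> S" using S(1) by blast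
      then show ?case by simp
    qed
    then show "odd k" using S(1) by blast
  next
    assume "odd k"
    then have "{w. even w} \<subseteq> {w. w \<noteq> k \<and> Suc (Suc w) \<in> {w. even w}}" by auto
    then show "mu_models (holed_chain k :: 'a kripke) (even_p p)"
      using models_iff by blast
  qed
qed

lemma even_p_not_ctlscd_expressible:
  fixes p :: "'a::finite"
  shows "\<not> (\<exists>\<phi> :: 'a sform. \<forall>K. is_kripke K \<longrightarrow>
           (models K \<phi> \<longleftrightarrow> mu_models K (even_p p)))"
proof
  assume "\<exists>\<phi> :: 'a sform. \<forall>K. is_kripke K \<longrightarrow>
           (models K \<phi> \<longleftrightarrow> mu_models K (even_p p))"
  then obtain \<phi> :: "'a sform" where \<phi>_equiv: "\<forall>K. is_kripke K \<longrightarrow>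
           (models K \<phi> \<longleftrightarrow> mu_models K (even_p p))"
    by blast
  have \<phi>: "models (holed_chain k) \<phi> \<longleftrightarrow> odd k" for k
    using \<phi>_equiv[rule_format, OF holed_chain_is_kripke] mu_models_holed_chain_even_p by simp
  let ?n = "next_depth \<phi>"
  have "hole_equiv ?n (int (2 * ?n + 1) - int 0) (int (2 * ?n + 2) - int 0)"
    by (simp add: hole_equiv_def)
  then have "sat (holed_chain (2 * ?n + 1)) 0 \<phi> = sat (holed_chain (2 * ?n + 2)) 0 \<phi>"
    by (rule holed_chain_sat_equiv(1)[OF order_refl])
  then show False
    using \<phi>[of "2 * ?n + 1"] \<phi>[of "2 * ?n + 2"]
    by (simp add: models_def)
qed

theorem mainTheorem6:
  fixes p :: "'a::finite"
  shows "(\<exists>\<phi> :: 'a sform. \<not> (\<exists>\<chi>. is_ctls \<chi> \<and>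
             (\<forall>K. is_kripke K \<longrightarrow> (models K \<phi> \<longleftrightarrow> models K \<chi>))))
    \<and> (\<exists>\<phi> :: 'a sform. \<not> (\<exists>\<chi>. mu_closed \<chi> \<and>
             (\<forall>K. is_kripke K \<longrightarrow> (models K \<phi> \<longleftrightarrow> mu_models K \<chi>))))
    \<and> (\<not> (\<exists>\<phi> :: 'a sform.
             \<forall>K. is_kripke K \<longrightarrow> (models K \<phi> \<longleftrightarrow> mu_models K (MGfp 0 (MAnd (MProp p) (MBox (MBox (MVar 0))))))))"
proof (intro conjI)
  let ?\<phi> = "ExC (State (SNot (Prop p)))"
  show "\<exists>\<phi> :: 'a sform. \<not> (\<exists>\<chi>. is_ctls \<chi> \<and>
             (\<forall>K. is_kripke K \<longrightarrow> (models K \<phi> \<longleftrightarrow> models K \<chi>)))"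
    by (rule exI[of _ ?\<phi>]) (rule ExC_not_ctls_expressible)
  show "\<exists>\<phi> :: 'a sform. \<not> (\<exists>\<chi>. mu_closed \<chi> \<and>
             (\<forall>K. is_kripke K \<longrightarrow> (models K \<phi> \<longleftrightarrow> mu_models K \<chi>)))"
    using ExC_not_mu_expressible[of p] by (intro exI[of _ ?\<phi>]) fast
qed (rule even_p_not_ctlscd_expressible)

end
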